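(* Let $u$ be any configuration on $K_{m,n}$. Then there exists a proof $f$ for the rank of $u$ whose support is contained in $B_n$, i.e. with $f_{a_i}=0$ for all $i=1,\dots,m$.
   Context: Let $m,n\ge 1$. $K_{m,n}$ is the complete bipartite graph with vertex set $V=A_m\sqcup B_n$, $A_m=\{a_1,\dots,a_m\}$, $B_n=\{b_1,\dots,b_n\}$, with exactly one edge $\{a_i,b_j\}$ for every $i,j$; $a_m$ is the sink. A configuration is a function $u:V\to\mathbb Z$; $\mathrm{degree}(u)=\sum_{c}u_c$. For $c\in V$ with graph degree $d_c$, $\Delta^{(c)}=d_c e_c-\sum_{c'\text{ adjacent to }c}e_{c'}$, where $e_c$ is the indicator configuration of $c$. Two configurations are toppling equivalent if their difference is an integer combination of the $\Delta^{(c)}$. A configuration is effective if it is toppling equivalent to a non-negative configuration. $\mathrm{rank}(u)=-1+\min\{\mathrm{degree}(f): f\ge 0,\ u-f\text{ not effective}\}$. A proof for the rank of $u$ is a non-negative $f$ with $u-f$ not effective and $\mathrm{degree}(f)=\mathrm{rank}(u)+1$. The support of a non-negative configuration $f$ is $\{c\in V: f_c>0\}$. *)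

theory Defs
  imports Main
begin

text \<open>Vertices of K_{m,n}: A i (a_i, 1 \<le> i \<le> m) and B j (b_j, 1 \<le> j \<le> n).
 The sink a_m plays no role in the definitions of equivalence, effectiveness and rank.\<close>

datatype vert = A nat | B nat

definition verts :: "nat \<Rightarrow> nat \<Rightarrow> vert set" where
  "verts m n = A ` {1..m} \<union> B ` {1..n}"

definition is_config :: "nat \<Rightarrow> nat \<Rightarrow> (vert \<Rightarrow> int) \<Rightarrow> bool" where
  "is_config m n u \<longleftrightarrow> (\<forall>v. v \<notin> verts m n \<longrightarrow> u v = 0)"

fun adj :: "nat \<Rightarrow> nat \<Rightarrow> vert \<Rightarrow> vert \<Rightarrow> bool" where
  "adj m n (A i) (B j) \<longleftrightarrow> 1 \<le> i \<and> i \<le> m \<and> 1 \<le> j \<and> j \<le> n"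
| "adj m n (B j) (A i) \<longleftrightarrow> 1 \<le> i \<and> i \<le> m \<and> 1 \<le> j \<and> j \<le> n"
| "adj m n _ _ \<longleftrightarrow> False"

definition gdeg :: "nat \<Rightarrow> nat \<Rightarrow> vert \<Rightarrow> int" where
  "gdeg m n c = int (card {c' \<in> verts m n. adj m n c c'})"

definition Delta :: "nat \<Rightarrow> nat \<Rightarrow> vert \<Rightarrow> vert \<Rightarrow> int" where
  "Delta m n c = (\<lambda>v. (if v = c then gdeg m n c else 0) - (if adj m n c v then 1 else 0))"

definition degree :: "nat \<Rightarrow> nat \<Rightarrow> (vert \<Rightarrow> int) \<Rightarrow> int" where
  "degree m n u = (\<Sum>v\<in>verts m n. u v)"

definition toppling_equiv :: "nat \<Rightarrow> nat \<Rightarrow> (vert \<Rightarrow> int) \<Rightarrow> (vert \<Rightarrow> int) \<Rightarrow> bool" where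
  "toppling_equiv m n u w \<longleftrightarrow>
     (\<exists>z :: vert \<Rightarrow> int. \<forall>v\<in>verts m n. u v - w v = (\<Sum>c\<in>verts m n. z c * Delta m n c v))"

definition nonneg :: "nat \<Rightarrow> nat \<Rightarrow> (vert \<Rightarrow> int) \<Rightarrow> bool" where
  "nonneg m n f \<longleftrightarrow> is_config m n f \<and> (\<forall>v\<in>verts m n. 0 \<le> f v)"

definition effective :: "nat \<Rightarrow> nat \<Rightarrow> (vert \<Rightarrow> int) \<Rightarrow> bool" where
  "effective m n u \<longleftrightarrow> (\<exists>g. nonneg m n g \<and> toppling_equiv m n u g)"

definition rank :: "nat \<Rightarrow> nat \<Rightarrow> (vert \<Rightarrow> int) \<Rightarrow> int" where
  "rank m n u = -1 + Inf {degree m n f | f. nonneg m n f \<and> \<not> effective m n (\<lambda>v. u v - f v)}"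

definition rank_proof :: "nat \<Rightarrow> nat \<Rightarrow> (vert \<Rightarrow> int) \<Rightarrow> (vert \<Rightarrow> int) \<Rightarrow> bool" where
  "rank_proof m n u f \<longleftrightarrow> nonneg m n f \<and> \<not> effective m n (\<lambda>v. u v - f v)
      \<and> degree m n f = rank m n u + 1"

definition support :: "nat \<Rightarrow> nat \<Rightarrow> (vert \<Rightarrow> int) \<Rightarrow> vert set" where
  "support m n f = {c \<in> verts m n. f c > 0}"

end

theory Submission
  imports Defs
begin

text \<open>On K_{m,n} a firing script z changes the value at a_i by n z(a_i) - Y and at b_j by
 m z(b_j) - X, where X and Y are the totals fired on the two sides. So effectiveness reduces to an
 inequality between two floor sums in X and Y. With this criterion one shows that a chip of f on
 some a_i can be moved to a suitable b_j without making u - f effective; moving the chips of a rank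
 proof one at a time gives a rank proof of the same degree supported on B.\<close>

lemma A_in_verts [simp]: "A i \<in> verts m n \<longleftrightarrow> 1 \<le> i \<and> i \<le> m"
  by (auto simp: verts_def)

lemma B_in_verts [simp]: "B j \<in> verts m n \<longleftrightarrow> 1 \<le> j \<and> j \<le> n"
  by (auto simp: verts_def)

lemma finite_verts [simp]: "finite (verts m n)"
  by (simp add: verts_def)

lemma sum_verts: "(\<Sum>v\<in>verts m n. g v) = (\<Sum>i=1..m. g (A i)) + (\<Sum>j=1..n. g (B j))"
proof -
  have "(\<Sum>v\<in>verts m n. g v) = sum g (A ` {1..m}) + sum g (B ` {1..n})"
    unfolding verts_def by (rule sum.union_disjoint) auto
  also have "\<dots> = (\<Sum>i=1..m. g (A i)) + (\<Sum>j=1..n. g (B j))"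
    by (simp add: sum.reindex inj_on_def)
  finally show ?thesis .
qed

lemma int_div_plus_one:
  fixes a d :: int
  assumes "0 < d"
  shows "(a + 1) div d = a div d + of_bool (d dvd a + 1)"
proof -
  define r where "r = a mod d"
  have a: "a + 1 = (r + 1) + (a div d) * d" by (simp add: r_def)
  have r: "0 \<le> r" "r < d" using assms by (simp_all add: r_def)
  show ?thesis
  proof (cases "r + 1 = d")
    case True
    then have "a + 1 = (a div d + 1) * d" using a by (simp add: algebra_simps)
    then show ?thesis using assms by simp
  next
    case False
    then have "0 \<le> r + 1" "r + 1 < d" using r by auto
    then have "(a + 1) div d = a div d" "(a + 1) mod d = r + 1"
      unfolding a by simp_all
    then show ?thesis using r by (simp add: dvd_eq_mod_eq_0)
  qed
qed

lemma int_le_div_iff: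
  fixes a d x :: int
  assumes "0 < d"
  shows "x \<le> a div d \<longleftrightarrow> d * x \<le> a"
proof
  assume "x \<le> a div d"
  then have "d * x \<le> d * (a div d)" using assms by simp
  also have "\<dots> \<le> a" using assms minus_mod_eq_mult_div[of a d] pos_mod_sign[of d a] by linarith
  finally show "d * x \<le> a" .
next
  assume "d * x \<le> a"
  then have "(d * x) div d \<le> a div d" using assms by (rule zdiv_mono1)
  then show "x \<le> a div d" using assms by simp
qed

subsection \<open>Firing scripts\<close>

definition firing :: "nat \<Rightarrow> nat \<Rightarrow> (vert \<Rightarrow> int) \<Rightarrow> vert \<Rightarrow> int" where
  "firing m n z v = (\<Sum>c\<in>verts m n. z c * Delta m n c v)"

lemma toppling_equiv_iff_firing:
  "toppling_equiv m n u w \<longleftrightarrow> (\<exists>z. \<forall>v\<in>verts m n. u v - w v = firing m n z v)"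
  by (simp add: toppling_equiv_def firing_def)

lemma gdeg_A: "1 \<le> i \<Longrightarrow> i \<le> m \<Longrightarrow> gdeg m n (A i) = int n"
proof -
  assume "1 \<le> i" "i \<le> m"
  then have "{c' \<in> verts m n. adj m n (A i) c'} = B ` {1..n}"
    by (auto simp: verts_def elim: adj.elims)
  then show ?thesis by (simp add: gdeg_def card_image inj_on_def)
qed

lemma gdeg_B: "1 \<le> j \<Longrightarrow> j \<le> n \<Longrightarrow> gdeg m n (B j) = int m"
proof -
  assume "1 \<le> j" "j \<le> n"
  then have "{c' \<in> verts m n. adj m n (B j) c'} = A ` {1..m}"
    by (auto simp: verts_def elim: adj.elims)
  then show ?thesis by (simp add: gdeg_def card_image inj_on_def)
qed

lemma firing_A:
  assumes "1 \<le> i" "i \<le> m"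
  shows "firing m n z (A i) = int n * z (A i) - (\<Sum>j=1..n. z (B j))"
proof -
  have "(\<Sum>i'=1..m. z (A i') * Delta m n (A i') (A i)) = (\<Sum>i'=1..m. if i' = i then int n * z (A i) else 0)"
    by (rule sum.cong) (auto simp: Delta_def gdeg_A)
  moreover have "(\<Sum>j=1..n. z (B j) * Delta m n (B j) (A i)) = (\<Sum>j=1..n. - z (B j))"
    by (rule sum.cong) (use assms in \<open>auto simp: Delta_def\<close>)
  ultimately show ?thesis using assms by (simp add: firing_def sum_verts sum_negf)
qed

lemma firing_B:
  assumes "1 \<le> j" "j \<le> n"
  shows "firing m n z (B j) = int m * z (B j) - (\<Sum>i=1..m. z (A i))"
proof -
  have "(\<Sum>j'=1..n. z (B j') * Delta m n (B j') (B j)) = (\<Sum>j'=1..n. if j' = j then int m * z (B j) else 0)"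
    by (rule sum.cong) (auto simp: Delta_def gdeg_B)
  moreover have "(\<Sum>i=1..m. z (A i) * Delta m n (A i) (B j)) = (\<Sum>i=1..m. - z (A i))"
    by (rule sum.cong) (use assms in \<open>auto simp: Delta_def\<close>)
  ultimately show ?thesis using assms by (simp add: firing_def sum_verts sum_negf)
qed

lemma sum_firing: "(\<Sum>v\<in>verts m n. firing m n z v) = 0"
proof -
  have "(\<Sum>v\<in>verts m n. Delta m n c v) = 0" if "c \<in> verts m n" for c
    using that by (simp add: Delta_def sum_subtractf sum.If_cases gdeg_def Int_def conj_commute)
  then show ?thesis
    unfolding firing_def by (subst sum.swap) (simp add: sum_distrib_left[symmetric])
qed

lemma degree_nonneg: "nonneg m n f \<Longrightarrow> 0 \<le> degree m n f"
  by (auto simp: degree_def nonneg_def intro: sum_nonneg)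

lemma effective_degree_nonneg:
  assumes "effective m n Q"
  shows "0 \<le> degree m n Q"
proof -
  obtain g z where g: "nonneg m n g" and z: "\<forall>v\<in>verts m n. Q v - g v = firing m n z v"
    using assms unfolding effective_def toppling_equiv_iff_firing by blast
  have "degree m n Q = degree m n g + (\<Sum>v\<in>verts m n. firing m n z v)"
    using z by (simp add: degree_def sum.distrib[symmetric] algebra_simps)
  also have "\<dots> = degree m n g" by (simp add: sum_firing)
  also have "\<dots> \<ge> 0" using g by (rule degree_nonneg)
  finally show ?thesis .
qed

lemma effective_mono:
  assumes "effective m n Q" and "\<forall>v\<in>verts m n. Q v \<le> Q' v"
  shows "effective m n Q'"
proof -
  obtain g where g: "nonneg m n g" and eq: "toppling_equiv m n Q g"
    using assms(1) unfolding effective_def by blast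
  define g' where "g' v = (if v \<in> verts m n then g v + (Q' v - Q v) else 0)" for v
  have "nonneg m n g'"
    using g assms(2) by (auto simp: nonneg_def is_config_def g'_def)
  moreover have "toppling_equiv m n Q' g'"
    using eq by (simp add: toppling_equiv_def g'_def)
  ultimately show ?thesis unfolding effective_def by blast
qed

subsection \<open>An effectiveness criterion\<close>

text \<open>If the vertices of B fire Y times in total, vertex a_i may fire at most
 (Q a_i + Y) div n times without going into debt; max_firings_A is the resulting bound on the
 total number of firings on the A side, and symmetrically for max_firings_B.\<close>

definition max_firings_A :: "nat \<Rightarrow> nat \<Rightarrow> (vert \<Rightarrow> int) \<Rightarrow> int \<Rightarrow> int" where
  "max_firings_A m n Q Y = (\<Sum>i=1..m. (Q (A i) + Y) div int n)"

definition max_firings_B :: "nat \<Rightarrow> nat \<Rightarrow> (vert \<Rightarrow> int) \<Rightarrow> int \<Rightarrow> int" where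
  "max_firings_B m n Q X = (\<Sum>j=1..n. (Q (B j) + X) div int m)"

lemma max_firings_B_mono: "1 \<le> m \<Longrightarrow> X \<le> X' \<Longrightarrow> max_firings_B m n Q X \<le> max_firings_B m n Q X'"
  unfolding max_firings_B_def by (intro sum_mono zdiv_mono1) auto

lemma effective_iff_max_firings:
  assumes m: "1 \<le> m" and n: "1 \<le> n"
  shows "effective m n Q \<longleftrightarrow> (\<exists>X Y. X \<le> max_firings_A m n Q Y \<and> Y \<le> max_firings_B m n Q X)"
proof
  assume "effective m n Q"
  then obtain g z where g: "nonneg m n g" and z: "\<forall>v\<in>verts m n. Q v - g v = firing m n z v"
    unfolding effective_def toppling_equiv_iff_firing by blast
  define X where "X = (\<Sum>i=1..m. z (A i))"
  define Y where "Y = (\<Sum>j=1..n. z (B j))"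
  have "X \<le> max_firings_A m n Q Y" unfolding X_def max_firings_A_def
  proof (rule sum_mono)
    fix i assume "i \<in> {1..m}"
    then have "Q (A i) - g (A i) = int n * z (A i) - Y" and "0 \<le> g (A i)"
      using z g by (auto simp: firing_A Y_def nonneg_def)
    then show "z (A i) \<le> (Q (A i) + Y) div int n" using n by (simp add: int_le_div_iff)
  qed
  moreover have "Y \<le> max_firings_B m n Q X" unfolding Y_def max_firings_B_def
  proof (rule sum_mono)
    fix j assume "j \<in> {1..n}"
    then have "Q (B j) - g (B j) = int m * z (B j) - X" and "0 \<le> g (B j)"
      using z g by (auto simp: firing_B X_def nonneg_def)
    then show "z (B j) \<le> (Q (B j) + X) div int m" using m by (simp add: int_le_div_iff)
  qed
  ultimately show "\<exists>X Y. X \<le> max_firings_A m n Q Y \<and> Y \<le> max_firings_B m n Q X" by blast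
next
  assume "\<exists>X Y. X \<le> max_firings_A m n Q Y \<and> Y \<le> max_firings_B m n Q X"
  then obtain X Y where X: "X \<le> max_firings_A m n Q Y" and Y: "Y \<le> max_firings_B m n Q X"
    by blast
  \<comment> \<open>Fire every vertex as often as allowed, then take back the surplus at a_1 and b_1.\<close>
  define z where "z v = (case v of
      A i \<Rightarrow> (Q (A i) + Y) div int n - of_bool (i = 1) * (max_firings_A m n Q Y - X)
    | B j \<Rightarrow> (Q (B j) + X) div int m - of_bool (j = 1) * (max_firings_B m n Q X - Y))" for v
  have zA: "(\<Sum>i=1..m. z (A i)) = X"
    using m by (simp add: z_def sum_subtractf max_firings_A_def)
  have zB: "(\<Sum>j=1..n. z (B j)) = Y"
    using n by (simp add: z_def sum_subtractf max_firings_B_def)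
  define g where "g v = (if v \<in> verts m n then Q v - firing m n z v else 0)" for v
  have "0 \<le> g v" if "v \<in> verts m n" for v
  proof (cases v)
    case (A i)
    have "z (A i) \<le> (Q (A i) + Y) div int n" using X by (simp add: z_def)
    then show ?thesis using A that n zB by (simp add: g_def firing_A int_le_div_iff)
  next
    case (B j)
    have "z (B j) \<le> (Q (B j) + X) div int m" using Y by (simp add: z_def)
    then show ?thesis using B that m zA by (simp add: g_def firing_B int_le_div_iff)
  qed
  then have "nonneg m n g" by (simp add: nonneg_def is_config_def g_def)
  moreover have "toppling_equiv m n Q g"
    unfolding toppling_equiv_iff_firing by (rule exI[of _ z]) (simp add: g_def)
  ultimately show "effective m n Q" unfolding effective_def by blast
qed

lemma not_effective_iff_max_firings:
  assumes "1 \<le> m" and "1 \<le> n"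
  shows "\<not> effective m n Q \<longleftrightarrow> (\<forall>Y. max_firings_B m n Q (max_firings_A m n Q Y) < Y)"
  unfolding effective_iff_max_firings[OF assms]
  by (meson max_firings_B_mono[OF assms(1)] order.trans not_le order_refl)

subsection \<open>Moving a chip\<close>

lemma max_firings_A_upd_B [simp]: "max_firings_A m n (Q(B j := x)) = max_firings_A m n Q"
  by (simp add: max_firings_A_def fun_eq_iff)

lemma max_firings_B_upd_A [simp]: "max_firings_B m n (Q(A i := x)) = max_firings_B m n Q"
  by (simp add: max_firings_B_def fun_eq_iff)

lemma max_firings_A_step:
  assumes "1 \<le> n"
  shows "max_firings_A m n Q (Y + 1)
       = max_firings_A m n Q Y + (\<Sum>i=1..m. of_bool (int n dvd Q (A i) + Y + 1))"
  using assms int_div_plus_one[of "int n" "Q (A _) + Y"]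
  by (simp add: max_firings_A_def sum.distrib add.assoc)

lemma max_firings_B_step:
  assumes "1 \<le> m"
  shows "max_firings_B m n Q (X + 1)
       = max_firings_B m n Q X + (\<Sum>j=1..n. of_bool (int m dvd Q (B j) + X + 1))"
  using assms int_div_plus_one[of "int m" "Q (B _) + X"]
  by (simp add: max_firings_B_def sum.distrib add.assoc)

lemma max_firings_A_periodic:
  assumes "1 \<le> n"
  shows "max_firings_A m n Q (Y + int n * k) = max_firings_A m n Q Y + int m * k"
proof -
  have "(Q (A i) + (Y + int n * k)) div int n = (Q (A i) + Y) div int n + k" for i
    using assms by (simp add: add.assoc[symmetric] mult.commute)
  then show ?thesis by (simp add: max_firings_A_def sum.distrib)
qed

lemma max_firings_A_add_chip:
  assumes "1 \<le> n" and "1 \<le> i" "i \<le> m"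
  shows "max_firings_A m n (Q(A i := Q (A i) + 1)) Y
       = max_firings_A m n Q Y + of_bool (int n dvd Q (A i) + Y + 1)"
proof -
  have "max_firings_A m n (Q(A i := Q (A i) + 1)) Y
      = (\<Sum>i'=1..m. (Q (A i') + Y) div int n + (if i' = i then of_bool (int n dvd Q (A i) + Y + 1) else 0))"
    unfolding max_firings_A_def
    using assms int_div_plus_one[of "int n" "Q (A i) + Y"] by (intro sum.cong) (auto simp: algebra_simps)
  then show ?thesis using assms by (simp add: sum.distrib max_firings_A_def)
qed

lemma max_firings_B_add_chip:
  assumes "1 \<le> m" and "1 \<le> j" "j \<le> n"
  shows "max_firings_B m n (Q(B j := Q (B j) + 1)) X
       = max_firings_B m n Q X + of_bool (int m dvd Q (B j) + X + 1)"
proof -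
  have "max_firings_B m n (Q(B j := Q (B j) + 1)) X
      = (\<Sum>j'=1..n. (Q (B j') + X) div int m + (if j' = j then of_bool (int m dvd Q (B j) + X + 1) else 0))"
    unfolding max_firings_B_def
    using assms int_div_plus_one[of "int m" "Q (B j) + X"] by (intro sum.cong) (auto simp: algebra_simps)
  then show ?thesis using assms by (simp add: sum.distrib max_firings_B_def)
qed

lemma max_firings_B_remove_chip:
  assumes "1 \<le> m" and "1 \<le> j" "j \<le> n"
  shows "max_firings_B m n (Q(B j := Q (B j) - 1)) X
       = max_firings_B m n Q X - of_bool (int m dvd Q (B j) + X)"
  using max_firings_B_add_chip[OF assms, of "Q(B j := Q (B j) - 1)" X] by simp

lemma max_firings_B_jump:
  assumes "1 \<le> m" and "max_firings_B m n Q X < max_firings_B m n Q (X + 1)"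
  obtains j where "1 \<le> j" "j \<le> n" "int m dvd Q (B j) + X + 1"
proof -
  have "0 < card ({1..n} \<inter> {j. int m dvd Q (B j) + X + 1})"
    using assms by (simp add: max_firings_B_step)
  then show ?thesis using that by (auto simp: card_gt_0_iff)
qed

text \<open>If D + a_i is effective, a witnessing Y0 is a jump of max_firings_A at a_i, and
 max_firings_A Y0 is a jump of max_firings_B at some b_j. The jump at a_i recurs exactly at
 Y0 + n k, which max_firings_A maps to max_firings_A Y0 + m k, where the jump at b_j recurs;
 removing a chip at b_j lowers max_firings_B by one at exactly these points.\<close>

lemma not_effective_move_chip:
  assumes m: "1 \<le> m" and n: "1 \<le> n" and i: "1 \<le> i" "i \<le> m"
    and ne: "\<not> effective m n D"
  obtains j where "1 \<le> j" "j \<le> n"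
    "\<not> effective m n (D(A i := D (A i) + 1, B j := D (B j) - 1))"
proof -
  let ?F = "max_firings_A m n D" and ?G = "max_firings_B m n D"
  define D1 where "D1 = D(A i := D (A i) + 1)"
  let ?jump = "\<lambda>Y. int n dvd D (A i) + Y + 1"
  have neD: "?G (?F Y) < Y" for Y
    using ne not_effective_iff_max_firings[OF m n] by blast
  have F1: "max_firings_A m n D1 Y = ?F Y + of_bool (?jump Y)" for Y
    unfolding D1_def by (rule max_firings_A_add_chip[OF n i])
  have G1: "max_firings_B m n D1 = ?G"
    by (simp add: D1_def)
  show ?thesis
  proof (cases "effective m n D1")
    case False
    have "\<forall>v\<in>verts m n. (D1(B 1 := D1 (B 1) - 1)) v \<le> D1 v" by simp
    then have "\<not> effective m n (D1(B 1 := D1 (B 1) - 1))"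
      using False effective_mono by blast
    then show ?thesis using that[of 1] n by (simp add: D1_def)
  next
    case True
    then obtain Y0 where "Y0 \<le> ?G (max_firings_A m n D1 Y0)"
      using not_effective_iff_max_firings[OF m n] G1 by (metis not_less)
    then have jump0: "?jump Y0" and "Y0 \<le> ?G (?F Y0 + 1)"
      using neD[of Y0] F1[of Y0] by (auto simp: of_bool_def split: if_splits)
    then have "?G (?F Y0) < ?G (?F Y0 + 1)" using neD[of Y0] by simp
    then obtain j where j: "1 \<le> j" "j \<le> n" and dvd_j: "int m dvd D (B j) + ?F Y0 + 1"
      by (rule max_firings_B_jump[OF m])
    define D2 where "D2 = D1(B j := D1 (B j) - 1)"
    have G2: "max_firings_B m n D2 X = ?G X - of_bool (int m dvd D (B j) + X)" for X
      using max_firings_B_remove_chip[OF m j, of D1 X] G1 by (simp add: D2_def D1_def)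
    have F2: "max_firings_A m n D2 = max_firings_A m n D1"
      by (simp add: D2_def)
    have "max_firings_B m n D2 (max_firings_A m n D2 Y) < Y" for Y
    proof (cases "?jump Y")
      case True
      then have "int n dvd Y - Y0" using jump0 dvd_diff by fastforce
      then obtain k where "Y = Y0 + int n * k" by (metis add_diff_cancel_left' add_diff_eq dvd_def)
      then have "?F Y = ?F Y0 + int m * k" by (simp add: max_firings_A_periodic[OF n])
      then have "D (B j) + (?F Y + 1) = (D (B j) + ?F Y0 + 1) + int m * k" by simp
      then have "int m dvd D (B j) + (?F Y + 1)" using dvd_j by (metis dvd_add dvd_triv_left)
      then have "max_firings_B m n D2 (max_firings_A m n D2 Y) = ?G (?F Y + 1) - 1"
        using True by (simp add: G2 F2 F1)
      also have "?F Y + 1 \<le> ?F (Y + 1)"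
        using True i member_le_sum[of i "{1..m}" "\<lambda>i'. of_bool (int n dvd D (A i') + Y + 1) :: int"]
        by (simp add: max_firings_A_step[OF n])
      then have "?G (?F Y + 1) \<le> ?G (?F (Y + 1))" by (rule max_firings_B_mono[OF m])
      finally show ?thesis using neD[of "Y + 1"] by simp
    next
      case False
      then show ?thesis using neD[of Y] by (simp add: G2 F2 F1)
    qed
    then have "\<not> effective m n D2" using not_effective_iff_max_firings[OF m n] by blast
    then show ?thesis using that j by (simp add: D2_def D1_def)
  qed
qed

subsection \<open>Rank proofs supported on B\<close>

lemma not_effective_shift_chip_to_B:
  assumes m: "1 \<le> m" and n: "1 \<le> n" and f: "nonneg m n f"
    and ne: "\<not> effective m n (\<lambda>v. u v - f v)"
    and i: "1 \<le> i" "i \<le> m" and pos: "0 < f (A i)"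
  obtains f' where "nonneg m n f'" "\<not> effective m n (\<lambda>v. u v - f' v)"
    "degree m n f' = degree m n f" "(\<Sum>i=1..m. f' (A i)) = (\<Sum>i=1..m. f (A i)) - 1"
proof -
  let ?D = "\<lambda>v. u v - f v"
  obtain j where j: "1 \<le> j" "j \<le> n"
    and ne': "\<not> effective m n (?D(A i := ?D (A i) + 1, B j := ?D (B j) - 1))"
    using not_effective_move_chip[OF m n i ne] .
  define f' where "f' = f(A i := f (A i) - 1, B j := f (B j) + 1)"
  have "(\<lambda>v. u v - f' v) = ?D(A i := ?D (A i) + 1, B j := ?D (B j) - 1)"
    by (auto simp: fun_eq_iff f'_def)
  then have "\<not> effective m n (\<lambda>v. u v - f' v)" using ne' by simp
  moreover have "nonneg m n f'"
    using f i j pos by (auto simp: nonneg_def is_config_def f'_def)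
  moreover have sum_A: "(\<Sum>i'=1..m. f' (A i')) = (\<Sum>i'=1..m. f (A i')) - 1"
  proof -
    have "(\<Sum>i'=1..m. f' (A i')) = (\<Sum>i'=1..m. f (A i') - of_bool (i' = i))"
      by (intro sum.cong) (auto simp: f'_def)
    then show ?thesis using i by (simp add: sum_subtractf)
  qed
  moreover have "degree m n f' = degree m n f"
  proof -
    have "(\<Sum>j'=1..n. f' (B j')) = (\<Sum>j'=1..n. f (B j') + of_bool (j' = j))"
      by (intro sum.cong) (auto simp: f'_def)
    then have "(\<Sum>j'=1..n. f' (B j')) = (\<Sum>j'=1..n. f (B j')) + 1"
      using j by (simp add: sum.distrib)
    then show ?thesis using sum_A by (simp add: degree_def sum_verts)
  qed
  ultimately show ?thesis using that by blast
qed

lemma not_effective_shift_to_B: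
  assumes m: "1 \<le> m" and n: "1 \<le> n" and f: "nonneg m n f"
    and ne: "\<not> effective m n (\<lambda>v. u v - f v)"
  shows "\<exists>g. nonneg m n g \<and> \<not> effective m n (\<lambda>v. u v - g v) \<and> degree m n g = degree m n f
           \<and> (\<forall>i\<in>{1..m}. g (A i) = 0)"
  using f ne
proof (induction "nat (\<Sum>i=1..m. f (A i))" arbitrary: f rule: less_induct)
  case less
  show ?case
  proof (cases "\<forall>i\<in>{1..m}. f (A i) = 0")
    case True
    then show ?thesis using less.prems by blast
  next
    case False
    then obtain i where i: "1 \<le> i" "i \<le> m" and pos: "0 < f (A i)"
      using less.prems(1) by (force simp: nonneg_def le_less)
    obtain f' where f': "nonneg m n f'" "\<not> effective m n (\<lambda>v. u v - f' v)"
      "degree m n f' = degree m n f" "(\<Sum>i=1..m. f' (A i)) = (\<Sum>i=1..m. f (A i)) - 1"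
      using not_effective_shift_chip_to_B[OF m n less.prems i pos] .
    have "f (A i) \<le> (\<Sum>i=1..m. f (A i))"
      using less.prems(1) i by (intro member_le_sum) (auto simp: nonneg_def)
    then have "nat (\<Sum>i=1..m. f' (A i)) < nat (\<Sum>i=1..m. f (A i))"
      using pos f'(4) by simp
    then show ?thesis using less.hyps f'(1,2,3) by fastforce
  qed
qed

lemma rank_proof_exists:
  assumes "1 \<le> n"
  shows "\<exists>f. rank_proof m n u f"
proof -
  let ?P = "\<lambda>f. nonneg m n f \<and> \<not> effective m n (\<lambda>v. u v - f v)"
  define f0 where "f0 v = (if v \<in> verts m n then \<bar>u v\<bar> + of_bool (v = B 1) else 0)" for v
  have "degree m n (\<lambda>v. u v - f0 v) \<le> (\<Sum>v\<in>verts m n. - of_bool (v = B 1))"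
    unfolding degree_def by (intro sum_mono) (auto simp: f0_def)
  also have "\<dots> = -1" using assms by (simp add: sum_negf)
  finally have "?P f0"
    using effective_degree_nonneg by (fastforce simp: nonneg_def is_config_def f0_def)
  then obtain f where f: "?P f" and least: "\<And>g. ?P g \<Longrightarrow> nat (degree m n f) \<le> nat (degree m n g)"
    using ex_has_least_nat[of ?P f0 "\<lambda>g. nat (degree m n g)"] by blast
  have "Inf {degree m n g | g. ?P g} = degree m n f"
    using f least degree_nonneg by (intro cInf_eq_minimum) fastforce+
  then show ?thesis using f by (auto simp: rank_proof_def rank_def)
qed

theorem lemma8p2:
  fixes m n :: nat and u :: "vert \<Rightarrow> int"
  assumes "1 \<le> m" and "1 \<le> n" and "is_config m n u"
  shows "\<exists>f. rank_proof m n u f \<and> support m n f \<subseteq> B ` {1..n}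
             \<and> (\<forall>i\<in>{1..m}. f (A i) = 0)"
proof -
  obtain f where "rank_proof m n u f"
    using rank_proof_exists[OF assms(2)] by blast
  then obtain g where "nonneg m n g" "\<not> effective m n (\<lambda>v. u v - g v)"
      "degree m n g = rank m n u + 1" and A_free: "\<forall>i\<in>{1..m}. g (A i) = 0"
    using not_effective_shift_to_B[OF assms(1,2)] unfolding rank_proof_def by metis
  then have "rank_proof m n u g" by (simp add: rank_proof_def)
  moreover have "support m n g \<subseteq> B ` {1..n}"
    using A_free by (auto simp: support_def verts_def)
  ultimately show ?thesis using A_free by blast
qed

end
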